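(* Let $h\ge2$ and let $r_1<s_1<r_2<s_2<\dots<s_{h-1}<r_h$ be real numbers. Let $P\in\mathbb{R}[X]$ be a polynomial of degree $2h$ with positive leading coefficient such that $P(X)>0$ for all $X\in\mathbb{R}$ and $P'(X)=c\,(X-r_h)\prod_{j=1}^{h-1}(X-r_j)(X-s_j)$ for some constant $c>0$. Write $P(X)=\kappa\prod_{j=1}^h\big((X-a_j)^2+b_j^2\big)$ with $\kappa>0$, $a_j,b_j\in\mathbb{R}$, $b_j>0$. Identify $\mathbb{R}^3=\mathbb{C}\times\mathbb{R}$, let $\xi=e^{2\pi i/3}$, and set $w_j^i=(\xi^ib_j,a_j)$ for $1\le j\le h$, $1\le i\le 3$. Let $F(x)=\prod_{j=1}^h\prod_{i=1}^3|x-w_j^i|^2$. Then the $3h$ points $w_j^i$ are pairwise distinct and: (1) the points $(0,r_j)$, $1\le j\le h$, are nondegenerate local minima of $F$ which are not absolute minima; (2) the points $(0,s_j)$, $1\le j\le h-1$, are nondegenerate critical points of $F$ of negativity index $1$; (3) the $3h$ points $w_j^i$ are the absolute minima of $F$.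
   Context: $|\cdot|$ is the Euclidean norm on $\mathbb{R}^3$. The negativity index of a nondegenerate critical point is the number of negative eigenvalues of the Hessian. *)

theory Defs
  imports "HOL-Analysis.Analysis" "HOL-Computational_Algebra.Polynomial"
begin

definition partial_deriv :: "'n::finite \<Rightarrow> (real^'n \<Rightarrow> real) \<Rightarrow> real^'n \<Rightarrow> real" where
  "partial_deriv i f x = deriv (\<lambda>t. f (x + t *\<^sub>R axis i 1)) 0"

definition hessian :: "(real^'n::finite \<Rightarrow> real) \<Rightarrow> real^'n \<Rightarrow> real^'n^'n" where
  "hessian f x = (\<chi> i j. partial_deriv i (partial_deriv j f) x)"

definition critical_point :: "(real^'n::finite \<Rightarrow> real) \<Rightarrow> real^'n \<Rightarrow> bool" where
  "critical_point f x \<longleftrightarrow> (f has_derivative (\<lambda>_. 0)) (at x)"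

definition nondegenerate_critical_point :: "(real^'n::finite \<Rightarrow> real) \<Rightarrow> real^'n \<Rightarrow> bool" where
  "nondegenerate_critical_point f x \<longleftrightarrow> critical_point f x \<and> det (hessian f x) \<noteq> 0"

definition charpoly :: "real^'n::finite^'n \<Rightarrow> real poly" where
  "charpoly A = det (\<chi> i j. (if i = j then [:0, 1:] else 0) - [:A $ i $ j:])"

definition negativity_index :: "(real^'n::finite \<Rightarrow> real) \<Rightarrow> real^'n \<Rightarrow> nat" where
  "negativity_index f x =
     (\<Sum>e\<in>{e. e < 0 \<and> poly (charpoly (hessian f x)) e = 0}. order e (charpoly (hessian f x)))"

definition local_min_at :: "(real^'n::finite \<Rightarrow> real) \<Rightarrow> real^'n \<Rightarrow> bool" where
  "local_min_at f x \<longleftrightarrow> (\<exists>e>0. \<forall>y. dist y x < e \<longrightarrow> f x \<le> f y)"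

definition global_min_at :: "(real^'n::finite \<Rightarrow> real) \<Rightarrow> real^'n \<Rightarrow> bool" where
  "global_min_at f x \<longleftrightarrow> (\<forall>y. f x \<le> f y)"

definition pt3 :: "complex \<Rightarrow> real \<Rightarrow> real^3" where
  "pt3 z t = vector [Re z, Im z, t]"

definition xi :: complex where "xi = cis (2 * pi / 3)"

definition wpt :: "(nat \<Rightarrow> real) \<Rightarrow> (nat \<Rightarrow> real) \<Rightarrow> nat \<Rightarrow> nat \<Rightarrow> real^3" where
  "wpt a b j i = pt3 (xi ^ i * complex_of_real (b j)) (a j)"

definition Ffun :: "nat \<Rightarrow> (nat \<Rightarrow> real) \<Rightarrow> (nat \<Rightarrow> real) \<Rightarrow> real^3 \<Rightarrow> real" where
  "Ffun h a b x = (\<Prod>j\<in>{1..h}. \<Prod>i\<in>{1..3}. (norm (x - wpt a b j i))^2)"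

end

theory Submission
  imports Defs
begin

text \<open>
  Write points of \<open>\<real>\<^sup>3 = \<complex> \<times> \<real>\<close> as \<open>(z, t)\<close>. The product of the squared distances from \<open>(z, t)\<close>
  to the three points \<open>w\<^sub>j\<^sup>i\<close> equals
  \<open>(|z|\<^sup>2 + b\<^sub>j\<^sup>2 + (t - a\<^sub>j)\<^sup>2)\<^sup>3 - 3 b\<^sub>j\<^sup>2 |z|\<^sup>2 (|z|\<^sup>2 + b\<^sub>j\<^sup>2 + (t - a\<^sub>j)\<^sup>2) - 2 b\<^sub>j\<^sup>3 Re z\<^sup>3\<close>,
  so on the axis \<open>z = 0\<close> we get \<open>F = (P / \<kappa>)\<^sup>3\<close>. At a critical point \<open>t\<close> of \<open>P\<close> the point
  \<open>(0, t)\<close> is critical for \<open>F\<close> and the Hessian there is diagonal: both horizontal entries are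
  positive (not all \<open>a\<^sub>j\<close> equal \<open>t\<close>, since \<open>P'\<close> has two distinct roots) and the vertical entry is
  \<open>3 P(t)\<^sup>2 P''(t) / \<kappa>\<^sup>3\<close>. Interlacing makes \<open>P''\<close> positive at the \<open>r\<^sub>j\<close> and negative at the
  \<open>s\<^sub>j\<close>. Near \<open>(0, r\<^sub>j)\<close> every factor is at least its value on the axis times \<open>1 - K|z|\<^sup>3\<close>,
  and a factor with \<open>a\<^sub>j \<noteq> r\<^sub>j\<close> even gains \<open>g|z|\<^sup>2\<close>; this yields the local minima.
  \<open>F\<close> vanishes exactly at the \<open>w\<^sub>j\<^sup>i\<close>, and these are distinct because a repeated factor of
  \<open>P\<close> would make the non-real number \<open>a\<^sub>j + i b\<^sub>j\<close> a root of \<open>P'\<close>, whose roots are all real.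
\<close>

section \<open>Partial derivatives and Hessians\<close>

lemma partial_derivI:
  "((\<lambda>t. f (x + t *\<^sub>R axis i 1)) has_real_derivative D) (at 0) \<Longrightarrow> partial_deriv i f x = D"
  unfolding partial_deriv_def by (rule DERIV_imp_deriv)

lemma partial_deriv_has_derivative:
  assumes "(f has_derivative D) (at x)"
  shows "partial_deriv i f x = D (axis i 1)"
proof (rule partial_derivI)
  have "((\<lambda>t. x + t *\<^sub>R axis i 1) has_derivative (\<lambda>t. t *\<^sub>R axis i 1)) (at 0)"
    by (auto intro!: derivative_eq_intros)
  from has_derivative_compose[OF this] assms
  have "((\<lambda>t. f (x + t *\<^sub>R axis i 1)) has_derivative (\<lambda>t. D (t *\<^sub>R axis i 1))) (at 0)"
    by simp
  moreover have "(\<lambda>t. D (t *\<^sub>R axis i 1)) = (*) (D (axis i 1))"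
    using has_derivative_bounded_linear[OF assms] by (auto simp: linear_simps)
  ultimately show "((\<lambda>t. f (x + t *\<^sub>R axis i 1)) has_real_derivative D (axis i 1)) (at 0)"
    unfolding has_field_derivative_def by simp
qed

lemma partial_deriv_prod:
  assumes "\<And>j y. j \<in> J \<Longrightarrow> (G j has_derivative G' j y) (at y)"
  shows "partial_deriv k (\<lambda>y. \<Prod>j\<in>J. G j y) =
    (\<lambda>y. \<Sum>j\<in>J. G' j y (axis k 1) * (\<Prod>l\<in>J-{j}. G l y))"
proof
  fix y
  have "((\<lambda>y. \<Prod>j\<in>J. G j y) has_derivative (\<lambda>v. \<Sum>j\<in>J. G' j y v * (\<Prod>l\<in>J-{j}. G l y))) (at y)"
    using assms by (intro has_derivative_prod) auto
  then show "partial_deriv k (\<lambda>y. \<Prod>j\<in>J. G j y) y = (\<Sum>j\<in>J. G' j y (axis k 1) * (\<Prod>l\<in>J-{j}. G l y))"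
    by (rule partial_deriv_has_derivative)
qed

lemma partial_deriv2_prod:
  assumes G: "\<And>j y. j \<in> J \<Longrightarrow> (G j has_derivative G' j y) (at y)"
    and G': "\<And>j y. j \<in> J \<Longrightarrow> (\<lambda>y. G' j y (axis k 1)) differentiable (at y)"
  shows "partial_deriv i (partial_deriv k (\<lambda>y. \<Prod>j\<in>J. G j y)) x =
    (\<Sum>j\<in>J. partial_deriv i (\<lambda>y. G' j y (axis k 1)) x * (\<Prod>l\<in>J-{j}. G l x)
       + G' j x (axis k 1) * (\<Sum>l\<in>J-{j}. G' l x (axis i 1) * (\<Prod>m\<in>J-{j}-{l}. G m x)))"
proof -
  define G'' where "G'' j = frechet_derivative (\<lambda>y. G' j y (axis k 1)) (at x)" for j
  have G'': "((\<lambda>y. G' j y (axis k 1)) has_derivative G'' j) (at x)" if "j \<in> J" for j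
    using G'[OF that] unfolding G''_def frechet_derivative_works .
  have "((\<lambda>y. \<Sum>j\<in>J. G' j y (axis k 1) * (\<Prod>l\<in>J-{j}. G l y)) has_derivative
      (\<lambda>v. \<Sum>j\<in>J. G' j x (axis k 1) * (\<Sum>l\<in>J-{j}. G' l x v * (\<Prod>m\<in>J-{j}-{l}. G m x))
         + G'' j v * (\<Prod>l\<in>J-{j}. G l x))) (at x)"
    using G G'' by (intro has_derivative_sum has_derivative_mult has_derivative_prod) auto
  from partial_deriv_has_derivative[OF this, of i]
  show ?thesis
    by (simp add: partial_deriv_prod[OF G] partial_deriv_has_derivative[OF G''] add.commute)
qed

lemma has_derivative_vec_nth [derivative_intros]:
  "((\<lambda>y::real^'n. y $ i) has_derivative (\<lambda>v. v $ i)) (at y within S)"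
  by (rule bounded_linear_imp_has_derivative) (rule bounded_linear_vec_nth)

lemma differentiable_vec_nth [derivative_intros]:
  "(\<lambda>y::real^'n. y $ i) differentiable (at y within S)"
  using has_derivative_vec_nth unfolding differentiable_def by blast

lemma axis_vec_nth: "axis i (1::real) $ m = (if m = i then 1 else 0)"
  by (simp add: axis_def)

lemma prod_UNIV_3: "prod f (UNIV::3 set) = f 1 * f 2 * f 3"
  unfolding UNIV_3 by (simp add: mult.assoc)

lemma charpoly_diagonal:
  fixes H :: "real^'n^'n"
  assumes "\<And>i k. i \<noteq> k \<Longrightarrow> H$i$k = 0"
  shows "charpoly H = (\<Prod>i\<in>UNIV. [:- H$i$i, 1:])"
  unfolding charpoly_def by (subst det_diagonal) (auto simp: assms)

lemma det_diagonal3: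
  fixes H :: "real^3^3"
  assumes "\<And>i k. i \<noteq> k \<Longrightarrow> H$i$k = 0"
  shows "det H = H$1$1 * H$2$2 * H$3$3"
  using det_diagonal[of H] assms prod_UNIV_3[of "\<lambda>i. H$i$i"] by simp

lemma negativity_index_diagonal3:
  fixes f :: "real^3 \<Rightarrow> real"
  assumes off: "\<And>i k. i \<noteq> k \<Longrightarrow> hessian f x $ i $ k = 0"
    and pos: "hessian f x $ 1 $ 1 > 0" "hessian f x $ 2 $ 2 > 0" and neg: "hessian f x $ 3 $ 3 < 0"
  shows "negativity_index f x = 1"
proof -
  define l1 l2 m where "l1 = hessian f x $ 1 $ 1" "l2 = hessian f x $ 2 $ 2" "m = hessian f x $ 3 $ 3"
  have l: "l1 > 0" "l2 > 0" "m < 0" using pos neg unfolding l1_l2_m_def by simp_all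
  have cp: "charpoly (hessian f x) = [:-l1,1:] * [:-l2,1:] * [:-m,1:]"
    using charpoly_diagonal[OF off] by (simp add: prod_UNIV_3 l1_l2_m_def)
  have roots: "{e. e < 0 \<and> poly (charpoly (hessian f x)) e = 0} = {m}"
    using l unfolding cp poly_mult by auto
  have "order m [:-l1,1:] = 0" "order m [:-l2,1:] = 0"
    using l order_root[of "[:-l1,1:]" m] order_root[of "[:-l2,1:]" m] by auto
  moreover have "order m [:-m,1:] = 1" using order_power_n_n[of m 1] by simp
  ultimately have "order m (charpoly (hessian f x)) = 1"
    unfolding cp using l by (subst order_mult, simp)+ simp
  then show ?thesis unfolding negativity_index_def roots by simp
qed

lemma local_min_of_second_derivative:
  fixes f f' :: "real \<Rightarrow> real"
  assumes f': "\<And>x. DERIV f x :> f' x" and f'': "DERIV f' r :> l" and l: "l > 0" and crit: "f' r = 0"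
  shows "\<exists>e>0. \<forall>u. \<bar>u - r\<bar> < e \<longrightarrow> f r \<le> f u"
proof -
  obtain d1 where d1: "d1 > 0" "\<And>h. 0 < h \<Longrightarrow> h < d1 \<Longrightarrow> 0 < f' (r + h)"
    using DERIV_pos_inc_right[OF f'' l] crit by metis
  obtain d2 where d2: "d2 > 0" "\<And>h. 0 < h \<Longrightarrow> h < d2 \<Longrightarrow> f' (r - h) < 0"
    using DERIV_pos_inc_left[OF f'' l] crit by metis
  have "f r \<le> f u" if u: "\<bar>u - r\<bar> < min d1 d2" for u
  proof (cases u r rule: linorder_cases)
    case greater
    then obtain z where "r < z" "z < u" "f u - f r = (u - r) * f' z"
      using MVT2[of r u f f'] f' by blast
    moreover have "0 < f' z" using d1(2)[of "z - r"] u \<open>r < z\<close> \<open>z < u\<close> by simp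
    ultimately have "0 < f u - f r" using greater by (metis mult_pos_pos diff_gt_0_iff_gt)
    then show ?thesis by simp
  next
    case less
    then obtain z where "u < z" "z < r" "f r - f u = (r - u) * f' z"
      using MVT2[of u r f f'] f' by blast
    moreover have "f' z < 0" using d2(2)[of "r - z"] u \<open>u < z\<close> \<open>z < r\<close> by simp
    ultimately show ?thesis using less mult_pos_neg[of "r - u" "f' z"] by simp
  qed simp
  then show ?thesis using d1(1) d2(1) by (intro exI[of _ "min d1 d2"]) auto
qed

section \<open>The factor of \<open>F\<close> belonging to one orbit\<close>

definition orbit_prod :: "real \<Rightarrow> real \<Rightarrow> real \<Rightarrow> real \<Rightarrow> real" where
  "orbit_prod b X Y D =
     (X\<^sup>2 + Y\<^sup>2 + b\<^sup>2 + D\<^sup>2)^3 - 3*b\<^sup>2*(X\<^sup>2 + Y\<^sup>2)*(X\<^sup>2 + Y\<^sup>2 + b\<^sup>2 + D\<^sup>2) - 2*b^3*(X^3 - 3*X*Y\<^sup>2)"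

lemma orbit_prod_eq:
  fixes q :: real assumes q: "q*q = 3"
  shows "((X + B/2)\<^sup>2 + (Y - q*B/2)\<^sup>2 + D\<^sup>2) * ((X + B/2)\<^sup>2 + (Y + q*B/2)\<^sup>2 + D\<^sup>2) *
      ((X - B)\<^sup>2 + Y\<^sup>2 + D\<^sup>2) = orbit_prod B X Y D"
proof -
  define C where "C = B/2"
  have B: "B = 2*C" unfolding C_def by simp
  have "(Y - q*C)\<^sup>2 = Y\<^sup>2 - 2*q*C*Y + (q*q)*C\<^sup>2" "(Y + q*C)\<^sup>2 = Y\<^sup>2 + 2*q*C*Y + (q*q)*C\<^sup>2"
    by (simp_all add: power2_eq_square algebra_simps)
  moreover have "((X + C)\<^sup>2 + (Y\<^sup>2 - 2*q*C*Y + 3*C\<^sup>2) + D\<^sup>2) * ((X + C)\<^sup>2 + (Y\<^sup>2 + 2*q*C*Y + 3*C\<^sup>2) + D\<^sup>2)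
      = ((X + C)\<^sup>2 + Y\<^sup>2 + 3*C\<^sup>2 + D\<^sup>2)\<^sup>2 - 4*(q*q)*C\<^sup>2*Y\<^sup>2"
    by (simp add: power2_eq_square algebra_simps)
  moreover have "(((X + C)\<^sup>2 + Y\<^sup>2 + 3*C\<^sup>2 + D\<^sup>2)\<^sup>2 - 4*3*C\<^sup>2*Y\<^sup>2) * ((X - 2*C)\<^sup>2 + Y\<^sup>2 + D\<^sup>2)
      = orbit_prod (2*C) X Y D"
    unfolding orbit_prod_def by algebra
  ultimately show ?thesis
    unfolding B by (simp add: q mult.assoc)
qed

lemma xi_eq: "xi = Complex (-1/2) (sqrt 3/2)"
  unfolding xi_def by (simp add: complex_eq_iff cos_120 sin_120)

lemma xi_squared: "xi^2 = Complex (-1/2) (-sqrt 3/2)"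
  by (simp add: xi_eq power2_eq_square complex_eq_iff field_simps)

lemma xi_cubed: "xi^3 = 1"
  by (simp add: xi_eq power3_eq_cube complex_eq_iff field_simps)

lemma norm_xi: "norm xi = 1"
  unfolding xi_def by simp

lemma pt3_nth [simp]: "pt3 z t $ 1 = Re z" "pt3 z t $ 2 = Im z" "pt3 z t $ 3 = t"
  by (simp_all add: pt3_def)

lemma norm_vec3_squared: "(norm (v::real^3))\<^sup>2 = (v$1)\<^sup>2 + (v$2)\<^sup>2 + (v$3)\<^sup>2"
  by (simp add: power2_norm_eq_inner inner_vec_def sum_3 power2_eq_square[symmetric])

lemma prod_norm_wpt:
  "(\<Prod>i\<in>{1..3}. (norm (y - wpt a b j i))\<^sup>2) = orbit_prod (b j) (y$1) (y$2) (y$3 - a j)"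
proof -
  have "{1..3::nat} = {1, 2, 3}" by auto
  then have "(\<Prod>i\<in>{1..3}. (norm (y - wpt a b j i))\<^sup>2) =
      (norm (y - wpt a b j 1))\<^sup>2 * (norm (y - wpt a b j 2))\<^sup>2 * (norm (y - wpt a b j 3))\<^sup>2"
    by (simp del: One_nat_def)
  moreover have "(norm (y - wpt a b j 1))\<^sup>2 = (y$1 + b j/2)\<^sup>2 + (y$2 - sqrt 3 * b j/2)\<^sup>2 + (y$3 - a j)\<^sup>2"
    by (simp add: norm_vec3_squared wpt_def xi_eq algebra_simps)
  moreover have "(norm (y - wpt a b j 2))\<^sup>2 = (y$1 + b j/2)\<^sup>2 + (y$2 + sqrt 3 * b j/2)\<^sup>2 + (y$3 - a j)\<^sup>2"
    by (simp add: norm_vec3_squared wpt_def xi_squared algebra_simps)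
  moreover have "(norm (y - wpt a b j 3))\<^sup>2 = (y$1 - b j)\<^sup>2 + (y$2)\<^sup>2 + (y$3 - a j)\<^sup>2"
    by (simp add: norm_vec3_squared wpt_def xi_cubed algebra_simps)
  ultimately show ?thesis
    using orbit_prod_eq[of "sqrt 3" "y$1" "b j" "y$2" "y$3 - a j"] by simp
qed

lemma Ffun_eq_orbit_prod: "Ffun h a b = (\<lambda>y. \<Prod>j\<in>{1..h}. orbit_prod (b j) (y$1) (y$2) (y$3 - a j))"
  unfolding Ffun_def prod_norm_wpt ..

definition orbit_prod_dX :: "real \<Rightarrow> real \<Rightarrow> real \<Rightarrow> real \<Rightarrow> real" where
  "orbit_prod_dX b X Y D = 6*X*(X\<^sup>2+Y\<^sup>2+b\<^sup>2+D\<^sup>2)\<^sup>2 - 6*b\<^sup>2*X*(X\<^sup>2+Y\<^sup>2+b\<^sup>2+D\<^sup>2) - 6*b\<^sup>2*(X\<^sup>2+Y\<^sup>2)*X - 6*b^3*(X\<^sup>2 - Y\<^sup>2)"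

definition orbit_prod_dY :: "real \<Rightarrow> real \<Rightarrow> real \<Rightarrow> real \<Rightarrow> real" where
  "orbit_prod_dY b X Y D = 6*Y*(X\<^sup>2+Y\<^sup>2+b\<^sup>2+D\<^sup>2)\<^sup>2 - 6*b\<^sup>2*Y*(X\<^sup>2+Y\<^sup>2+b\<^sup>2+D\<^sup>2) - 6*b\<^sup>2*(X\<^sup>2+Y\<^sup>2)*Y + 12*b^3*X*Y"

definition orbit_prod_dD :: "real \<Rightarrow> real \<Rightarrow> real \<Rightarrow> real \<Rightarrow> real" where
  "orbit_prod_dD b X Y D = 6*D*(X\<^sup>2+Y\<^sup>2+b\<^sup>2+D\<^sup>2)\<^sup>2 - 6*b\<^sup>2*(X\<^sup>2+Y\<^sup>2)*D"

definition orbit_prod_deriv :: "real \<Rightarrow> real \<Rightarrow> real^3 \<Rightarrow> real^3 \<Rightarrow> real" where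
  "orbit_prod_deriv a b y v =
     v$1 * orbit_prod_dX b (y$1) (y$2) (y$3 - a) + v$2 * orbit_prod_dY b (y$1) (y$2) (y$3 - a)
     + v$3 * orbit_prod_dD b (y$1) (y$2) (y$3 - a)"

lemmas orbit_prod_partials_def = orbit_prod_dX_def orbit_prod_dY_def orbit_prod_dD_def

lemma has_derivative_orbit_prod:
  "((\<lambda>y. orbit_prod b (y$1) (y$2) (y$3 - a)) has_derivative orbit_prod_deriv a b y) (at y)"
  unfolding orbit_prod_def orbit_prod_deriv_def orbit_prod_partials_def
  by (rule derivative_eq_intros refl | simp)+
    (simp add: fun_eq_iff algebra_simps power2_eq_square power3_eq_cube)

lemma orbit_prod_deriv_differentiable: "(\<lambda>y. orbit_prod_deriv a b y v) differentiable (at y)"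
  unfolding orbit_prod_deriv_def orbit_prod_partials_def by (intro derivative_intros)

lemma has_derivative_orbit_prod_deriv_axis:
  "((\<lambda>y. orbit_prod_deriv a b y v) has_derivative
     (\<lambda>w. 6*(b\<^sup>2 + (t-a)\<^sup>2)*(t-a)\<^sup>2 * (v$1 * w$1 + v$2 * w$2)
        + 6*(b\<^sup>2 + (t-a)\<^sup>2)*(b\<^sup>2 + 5*(t-a)\<^sup>2) * v$3 * w$3)) (at (pt3 0 t))"
  unfolding orbit_prod_deriv_def orbit_prod_partials_def
  by (rule derivative_eq_intros refl | simp)+
    (simp add: fun_eq_iff algebra_simps power2_eq_square power3_eq_cube)

lemma orbit_prod_axis: "orbit_prod b 0 0 D = (b\<^sup>2 + D\<^sup>2)^3"
  by (simp add: orbit_prod_def)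

lemma orbit_prod_deriv_axis: "orbit_prod_deriv a b (pt3 0 t) v = 6*(t-a)*(b\<^sup>2 + (t-a)\<^sup>2)\<^sup>2 * v$3"
  by (simp add: orbit_prod_deriv_def orbit_prod_partials_def)

section \<open>The function \<open>F\<close> on the axis\<close>

definition horizontal_hessian :: "nat \<Rightarrow> (nat \<Rightarrow> real) \<Rightarrow> (nat \<Rightarrow> real) \<Rightarrow> real \<Rightarrow> real" where
  "horizontal_hessian h a b t = (\<Sum>j\<in>{1..h}. 6*((b j)\<^sup>2 + (t - a j)\<^sup>2)*(t - a j)\<^sup>2 *
     (\<Prod>l\<in>{1..h}-{j}. ((b l)\<^sup>2 + (t - a l)\<^sup>2)^3))"

lemma hessian_Ffun_axis:
  assumes "i \<noteq> 3 \<or> k \<noteq> 3"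
  shows "hessian (Ffun h a b) (pt3 0 t) $ i $ k = (if i = k then horizontal_hessian h a b t else 0)"
proof -
  have "hessian (Ffun h a b) (pt3 0 t) $ i $ k =
      (\<Sum>j\<in>{1..h}. partial_deriv i (\<lambda>y. orbit_prod_deriv (a j) (b j) y (axis k 1)) (pt3 0 t) *
          (\<Prod>l\<in>{1..h}-{j}. orbit_prod (b l) 0 0 (t - a l))
        + orbit_prod_deriv (a j) (b j) (pt3 0 t) (axis k 1) *
          (\<Sum>l\<in>{1..h}-{j}. orbit_prod_deriv (a l) (b l) (pt3 0 t) (axis i 1) *
            (\<Prod>m\<in>{1..h}-{j}-{l}. orbit_prod (b m) 0 0 (t - a m))))"
    unfolding hessian_def Ffun_eq_orbit_prod
    by (subst partial_deriv2_prod) (auto intro: has_derivative_orbit_prod orbit_prod_deriv_differentiable)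
  also have "\<dots> = (\<Sum>j\<in>{1..h}. (if i = k then 6*((b j)\<^sup>2 + (t - a j)\<^sup>2)*(t - a j)\<^sup>2 else 0) *
          (\<Prod>l\<in>{1..h}-{j}. ((b l)\<^sup>2 + (t - a l)\<^sup>2)^3))"
    using assms exhaust_3[of k]
    by (intro sum.cong refl)
      (auto simp: partial_deriv_has_derivative[OF has_derivative_orbit_prod_deriv_axis]
        orbit_prod_deriv_axis orbit_prod_axis axis_vec_nth)
  finally show ?thesis
    by (simp add: horizontal_hessian_def if_distrib cong: if_cong)
qed

lemma pt3_plus_axis3: "pt3 z u + s *\<^sub>R axis 3 1 = pt3 z (u + s)"
  by (simp add: vec_eq_iff forall_3 axis_vec_nth)

lemma partial_deriv_3_axis:
  assumes "\<And>u. ((\<lambda>u. f (pt3 0 u)) has_real_derivative f' u) (at u)"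
  shows "partial_deriv 3 f (pt3 0 u) = f' u"
proof (rule partial_derivI)
  show "((\<lambda>s. f (pt3 0 u + s *\<^sub>R axis 3 1)) has_real_derivative f' u) (at 0)"
    using DERIV_shift[of "\<lambda>u. f (pt3 0 u)" "f' u" 0 u] assms[of u]
    by (simp add: pt3_plus_axis3 add.commute)
qed

definition axis_poly :: "nat \<Rightarrow> (nat \<Rightarrow> real) \<Rightarrow> (nat \<Rightarrow> real) \<Rightarrow> real poly" where
  "axis_poly h a b = (\<Prod>j\<in>{1..h}. [:- a j, 1:]^2 + [:(b j)^2:])"

lemma poly_axis_poly: "poly (axis_poly h a b) u = (\<Prod>j\<in>{1..h}. (b j)\<^sup>2 + (u - a j)\<^sup>2)"
  unfolding axis_poly_def poly_prod by (simp add: power2_eq_square algebra_simps)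

lemma Ffun_axis: "Ffun h a b (pt3 0 u) = (poly (axis_poly h a b) u)^3"
  unfolding Ffun_eq_orbit_prod poly_axis_poly
  by (simp add: orbit_prod_axis prod_power_distrib)

lemma partial_deriv_3_Ffun_axis:
  "partial_deriv 3 (Ffun h a b) (pt3 0 u) = 3 * (poly (axis_poly h a b) u)\<^sup>2 * poly (pderiv (axis_poly h a b)) u"
proof (rule partial_deriv_3_axis)
  show "((\<lambda>u. Ffun h a b (pt3 0 u)) has_real_derivative
      3 * (poly (axis_poly h a b) u)\<^sup>2 * poly (pderiv (axis_poly h a b)) u) (at u)" for u
    unfolding Ffun_axis by (rule derivative_eq_intros poly_DERIV refl | simp)+
qed

lemma hessian_Ffun_axis_33:
  "hessian (Ffun h a b) (pt3 0 t) $ 3 $ 3 =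
     6 * poly (axis_poly h a b) t * (poly (pderiv (axis_poly h a b)) t)\<^sup>2
     + 3 * (poly (axis_poly h a b) t)\<^sup>2 * poly (pderiv (pderiv (axis_poly h a b))) t"
  unfolding hessian_def vec_lambda_beta
proof (rule partial_deriv_3_axis)
  let ?p = "axis_poly h a b"
  show "((\<lambda>u. partial_deriv 3 (Ffun h a b) (pt3 0 u)) has_real_derivative
      6 * poly ?p u * (poly (pderiv ?p) u)\<^sup>2 + 3 * (poly ?p u)\<^sup>2 * poly (pderiv (pderiv ?p)) u) (at u)" for u
    unfolding partial_deriv_3_Ffun_axis
    by (rule derivative_eq_intros poly_DERIV refl | simp)+ (simp add: algebra_simps power2_eq_square)
qed

lemma has_derivative_Ffun_axis:
  "(Ffun h a b has_derivative (\<lambda>v. v$3 * partial_deriv 3 (Ffun h a b) (pt3 0 t))) (at (pt3 0 t))"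
proof -
  have "(Ffun h a b has_derivative (\<lambda>v. \<Sum>j\<in>{1..h}. orbit_prod_deriv (a j) (b j) (pt3 0 t) v *
      (\<Prod>l\<in>{1..h}-{j}. orbit_prod (b l) (pt3 0 t $ 1) (pt3 0 t $ 2) (pt3 0 t $ 3 - a l)))) (at (pt3 0 t))"
    unfolding Ffun_eq_orbit_prod by (rule has_derivative_prod) (rule has_derivative_orbit_prod)
  then have D: "(Ffun h a b has_derivative (\<lambda>v. \<Sum>j\<in>{1..h}. orbit_prod_deriv (a j) (b j) (pt3 0 t) v *
      (\<Prod>l\<in>{1..h}-{j}. orbit_prod (b l) 0 0 (t - a l)))) (at (pt3 0 t))"
    by simp
  have "(\<lambda>v. \<Sum>j\<in>{1..h}. orbit_prod_deriv (a j) (b j) (pt3 0 t) v *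
      (\<Prod>l\<in>{1..h}-{j}. orbit_prod (b l) 0 0 (t - a l))) = (\<lambda>v. v$3 * partial_deriv 3 (Ffun h a b) (pt3 0 t))"
    by (simp add: partial_deriv_has_derivative[OF D] orbit_prod_deriv_axis sum_distrib_left ac_simps)
  with D show ?thesis by simp
qed

lemma critical_point_Ffun_axis:
  assumes "poly (pderiv (axis_poly h a b)) t = 0"
  shows "critical_point (Ffun h a b) (pt3 0 t)"
  using has_derivative_Ffun_axis[of h a b t] assms
  unfolding critical_point_def partial_deriv_3_Ffun_axis by simp

lemma Ffun_nonneg: "0 \<le> Ffun h a b y"
  unfolding Ffun_def by (intro prod_nonneg) auto

lemma Ffun_eq_0_iff: "Ffun h a b y = 0 \<longleftrightarrow> y \<in> (\<lambda>(j, i). wpt a b j i) ` ({1..h} \<times> {1..3})"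
  unfolding Ffun_def by (auto simp: prod_zero_iff)

lemma global_min_Ffun_iff:
  assumes "h \<ge> 1"
  shows "global_min_at (Ffun h a b) x \<longleftrightarrow> x \<in> (\<lambda>(j, i). wpt a b j i) ` ({1..h} \<times> {1..3})"
proof -
  have "Ffun h a b (wpt a b 1 1) = 0" using assms Ffun_eq_0_iff by force
  then show ?thesis
    unfolding global_min_at_def using Ffun_nonneg Ffun_eq_0_iff by (metis order.antisym)
qed

section \<open>Local minima on the axis\<close>

lemma orbit_prod_lower_bound:
  assumes b: "b > 0" and K: "2 / b^3 \<le> K" and g: "g * (b\<^sup>2 + D\<^sup>2)\<^sup>2 \<le> 3 * D\<^sup>2"
  shows "(b\<^sup>2 + D\<^sup>2)^3 * (1 + g * (X\<^sup>2 + Y\<^sup>2) - K * (sqrt (X\<^sup>2 + Y\<^sup>2))^3) \<le> orbit_prod b X Y D"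
proof -
  define R where "R = b\<^sup>2 + D\<^sup>2"
  define p where "p = X\<^sup>2 + Y\<^sup>2"
  have R0: "0 \<le> R" and p0: "0 \<le> p" unfolding R_def p_def by simp_all
  have "X^3 - 3*X*Y\<^sup>2 = Re ((Complex X Y)^3)"
    by (simp add: power3_eq_cube power2_eq_square algebra_simps)
  also have "\<dots> \<le> cmod ((Complex X Y)^3)"
    by (rule complex_Re_le_cmod)
  also have "\<dots> = (sqrt p)^3"
    by (simp add: norm_power complex_norm p_def)
  finally have "2*b^3*(X^3 - 3*X*Y\<^sup>2) \<le> 2*b^3*(sqrt p)^3"
    using b by simp
  moreover have "2*b^3 \<le> K * R^3"
  proof -
    have "2*b^3 = 2/b^3 * (b\<^sup>2)^3"
      using b by (simp add: field_simps power2_eq_square power3_eq_cube)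
    also have "\<dots> \<le> K * R^3"
      using K b by (intro mult_mono power_mono) (auto simp: R_def intro: order_trans[OF _ K])
    finally show ?thesis .
  qed
  then have "2*b^3*(sqrt p)^3 \<le> K * R^3 * (sqrt p)^3"
    using p0 by (intro mult_right_mono) auto
  moreover have "g * R^3 * p \<le> 3*D\<^sup>2*R*p"
  proof -
    have "g * R^3 * p = (g * R\<^sup>2) * (R * p)" by (simp add: power2_eq_square power3_eq_cube)
    also have "\<dots> \<le> (3*D\<^sup>2) * (R * p)"
      using g R0 p0 by (intro mult_right_mono) (auto simp: R_def)
    finally show ?thesis by simp
  qed
  moreover have "orbit_prod b X Y D = R^3 + 3*D\<^sup>2*R*p + (3*D\<^sup>2*p\<^sup>2 + p^3) - 2*b^3*(X^3 - 3*X*Y\<^sup>2)"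
    unfolding orbit_prod_def R_def p_def by algebra
  moreover have "0 \<le> 3*D\<^sup>2*p\<^sup>2 + p^3" using p0 by simp
  ultimately show ?thesis
    unfolding R_def[symmetric] p_def[symmetric] by (simp add: algebra_simps)
qed

lemma perturbed_product_ge_one:
  fixes K g \<rho> :: real and n :: nat
  assumes \<rho>: "0 \<le> \<rho>" "\<rho> \<le> 1" and g: "0 \<le> g" and K: "0 \<le> K"
    and small: "(real n + 1) * K * \<rho> \<le> g/4" "(real n + 1) * K * \<rho> \<le> 1/4"
  shows "0 \<le> 1 - K*\<rho>^3" and "1 \<le> (1 + g*\<rho>\<^sup>2 - K*\<rho>^3) * (1 - K*\<rho>^3)^n"
proof -
  define u where "u = (real n + 1) * K * \<rho>^3"
  define G where "G = g * \<rho>\<^sup>2"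
  have u_eq: "u = ((real n + 1) * K * \<rho>) * \<rho>\<^sup>2" unfolding u_def by (simp add: power2_eq_square power3_eq_cube)
  have \<rho>2: "0 \<le> \<rho>\<^sup>2" "\<rho>\<^sup>2 \<le> 1" using \<rho> by (auto simp: power_le_one)
  have "((real n + 1) * K * \<rho>) * \<rho>\<^sup>2 \<le> (1/4) * 1"
    using small(2) \<rho>2 K \<rho> by (intro mult_mono) auto
  then have u1: "u \<le> 1/4" unfolding u_eq by simp
  have u2: "u \<le> G/4"
    unfolding u_eq G_def using mult_right_mono[OF small(1) \<rho>2(1)] by simp
  have Ku: "K*\<rho>^3 \<le> u" and nKu: "real n * (K*\<rho>^3) \<le> u"
    unfolding u_def using K \<rho> by (simp_all add: algebra_simps)
  have G0: "0 \<le> G" unfolding G_def using g by simp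
  have K0: "0 \<le> K*\<rho>^3" using K \<rho> by simp
  show A: "0 \<le> 1 - K*\<rho>^3" using Ku u1 by linarith
  have "1 - u \<le> (1 - K*\<rho>^3)^n"
    using Bernoulli_inequality[of "- (K*\<rho>^3)" n] A nKu by simp
  then have lower: "(1 + G - u) * (1 - u) \<le> (1 + G - K*\<rho>^3) * (1 - K*\<rho>^3)^n"
    using Ku u1 G0 by (intro mult_mono) linarith+
  have "u * G \<le> G/4" using mult_right_mono[OF u1 G0] by simp
  moreover have "(1 + G - u) * (1 - u) = 1 + G - 2*u - u*G + u*u"
    by (simp add: algebra_simps)
  ultimately have "1 \<le> (1 + G - u) * (1 - u)"
    using u2 G0 zero_le_square[of u] by linarith
  with lower show "1 \<le> (1 + g*\<rho>\<^sup>2 - K*\<rho>^3) * (1 - K*\<rho>^3)^n"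
    unfolding G_def by linarith
qed

lemma Ffun_ge_scaled_axis_value:
  fixes y :: "real^3"
  defines "\<rho> \<equiv> sqrt ((y$1)\<^sup>2 + (y$2)\<^sup>2)"
  assumes b: "\<And>j. j \<in> {1..h} \<Longrightarrow> b j > 0" and j0: "j0 \<in> {1..h}"
    and K: "\<And>j. j \<in> {1..h} \<Longrightarrow> 2 / (b j)^3 \<le> K" and g: "0 \<le> g"
    and g_j0: "g * ((b j0)\<^sup>2 + (y$3 - a j0)\<^sup>2)\<^sup>2 \<le> 3 * (y$3 - a j0)\<^sup>2"
    and small: "0 \<le> 1 - K*\<rho>^3"
  shows "Ffun h a b (pt3 0 (y$3)) * ((1 + g*\<rho>\<^sup>2 - K*\<rho>^3) * (1 - K*\<rho>^3)^(h-1)) \<le> Ffun h a b y"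
proof -
  define c where "c j = (if j = j0 then 1 + g*\<rho>\<^sup>2 - K*\<rho>^3 else 1 - K*\<rho>^3)" for j
  have "(\<Prod>j\<in>{1..h}. ((b j)\<^sup>2 + (y$3 - a j)\<^sup>2)^3 * c j) \<le> Ffun h a b y"
    unfolding Ffun_eq_orbit_prod
  proof (rule prod_mono, rule conjI)
    fix j assume j: "j \<in> {1..h}"
    have "0 \<le> c j" using small mult_nonneg_nonneg[OF g zero_le_power2[of \<rho>]] unfolding c_def by simp
    then show "0 \<le> ((b j)\<^sup>2 + (y$3 - a j)\<^sup>2)^3 * c j" by simp
    have "(if j = j0 then g else 0) * ((b j)\<^sup>2 + (y$3 - a j)\<^sup>2)\<^sup>2 \<le> 3 * (y$3 - a j)\<^sup>2"
      using g_j0 by simp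
    from orbit_prod_lower_bound[OF b[OF j] K[OF j] this]
    show "((b j)\<^sup>2 + (y$3 - a j)\<^sup>2)^3 * c j \<le> orbit_prod (b j) (y$1) (y$2) (y$3 - a j)"
      unfolding c_def \<rho>_def by (cases "j = j0") auto
  qed
  moreover have "(\<Prod>j\<in>{1..h}. c j) = (1 + g*\<rho>\<^sup>2 - K*\<rho>^3) * (1 - K*\<rho>^3)^(h-1)"
    using prod.remove[of "{1..h}" j0 c] j0 by (simp add: c_def)
  ultimately show ?thesis
    unfolding Ffun_axis poly_axis_poly prod.distrib by (simp add: prod_power_distrib)
qed

lemma axis_dist_le:
  "sqrt ((y$1)\<^sup>2 + (y$2)\<^sup>2) \<le> dist y (pt3 0 r)" "\<bar>y$3 - r\<bar> \<le> dist y (pt3 0 r)"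
proof -
  have d: "(dist y (pt3 0 r))\<^sup>2 = (y$1)\<^sup>2 + (y$2)\<^sup>2 + (y$3 - r)\<^sup>2"
    by (simp add: dist_norm norm_vec3_squared)
  have "sqrt ((y$1)\<^sup>2 + (y$2)\<^sup>2) \<le> sqrt ((dist y (pt3 0 r))\<^sup>2)"
    by (rule real_sqrt_le_mono) (simp add: d)
  then show "sqrt ((y$1)\<^sup>2 + (y$2)\<^sup>2) \<le> dist y (pt3 0 r)" by simp
  have "sqrt ((y$3 - r)\<^sup>2) \<le> sqrt ((dist y (pt3 0 r))\<^sup>2)"
    by (rule real_sqrt_le_mono) (simp add: d)
  then show "\<bar>y$3 - r\<bar> \<le> dist y (pt3 0 r)" by simp
qed

lemma quadratic_gain_near:
  fixes a r b :: real
  assumes "a \<noteq> r"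
  obtains g \<delta> where "g > 0" "\<delta> > 0" "\<And>t. \<bar>t - r\<bar> < \<delta> \<Longrightarrow> g * (b\<^sup>2 + (t - a)\<^sup>2)\<^sup>2 \<le> 3 * (t - a)\<^sup>2"
proof -
  define \<delta> where "\<delta> = \<bar>r - a\<bar> / 2"
  define M where "M = b\<^sup>2 + 9 * \<delta>\<^sup>2"
  have \<delta>: "\<delta> > 0" unfolding \<delta>_def using assms by simp
  then have M: "M > 0" unfolding M_def by (intro add_nonneg_pos) auto
  show thesis
  proof (rule that)
    show "3 * \<delta>\<^sup>2 / M\<^sup>2 > 0" "\<delta> > 0" using \<delta> M by simp_all
    fix t assume t: "\<bar>t - r\<bar> < \<delta>"
    have "\<delta> \<le> \<bar>t - a\<bar>" using t unfolding \<delta>_def by (auto simp: abs_if split: if_split_asm)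
    then have lower: "\<delta>\<^sup>2 \<le> (t - a)\<^sup>2" using \<delta> power_mono[of \<delta> "\<bar>t - a\<bar>" 2] by simp
    have "\<bar>t - a\<bar> \<le> 3 * \<delta>" using t unfolding \<delta>_def by (auto simp: abs_if split: if_split_asm)
    then have "(t - a)\<^sup>2 \<le> 9 * \<delta>\<^sup>2" using power_mono[of "\<bar>t - a\<bar>" "3 * \<delta>" 2] by simp
    then have "3 * \<delta>\<^sup>2 / M\<^sup>2 * (b\<^sup>2 + (t - a)\<^sup>2)\<^sup>2 \<le> 3 * \<delta>\<^sup>2 / M\<^sup>2 * M\<^sup>2"
      unfolding M_def by (intro mult_left_mono power_mono) auto
    also have "\<dots> \<le> 3 * (t - a)\<^sup>2" using M lower by simp
    finally show "3 * \<delta>\<^sup>2 / M\<^sup>2 * (b\<^sup>2 + (t - a)\<^sup>2)\<^sup>2 \<le> 3 * (t - a)\<^sup>2" .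
  qed
qed

lemma small_perturbed_product_ge_one:
  fixes g K :: real and n :: nat
  assumes g: "g > 0" and K: "K \<ge> 0"
  obtains \<rho>0 where "\<rho>0 > 0"
    "\<And>\<rho>. 0 \<le> \<rho> \<Longrightarrow> \<rho> < \<rho>0 \<Longrightarrow> 0 \<le> 1 - K*\<rho>^3 \<and> 1 \<le> (1 + g*\<rho>\<^sup>2 - K*\<rho>^3) * (1 - K*\<rho>^3)^n"
proof -
  define m where "m = (real n + 1) * K + 1"
  have m: "m > 0" unfolding m_def using K by (simp add: add_nonneg_pos)
  show thesis
  proof (rule that)
    show "min 1 (min g 1 / (4 * m)) > 0" using g m by simp
    fix \<rho> assume \<rho>: "0 \<le> \<rho>" "\<rho> < min 1 (min g 1 / (4 * m))"
    have "(real n + 1) * K * \<rho> \<le> m * (min g 1 / (4 * m))"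
      using \<rho> K unfolding m_def by (intro mult_mono) auto
    also have "\<dots> = min g 1 / 4" using m by simp
    finally have small: "(real n + 1) * K * \<rho> \<le> g/4" "(real n + 1) * K * \<rho> \<le> 1/4" by auto
    have "\<rho> \<le> 1" using \<rho> by simp
    from perturbed_product_ge_one[OF \<rho>(1) this less_imp_le[OF g] K small]
    show "0 \<le> 1 - K*\<rho>^3 \<and> 1 \<le> (1 + g*\<rho>\<^sup>2 - K*\<rho>^3) * (1 - K*\<rho>^3)^n" by blast
  qed
qed

lemma local_min_Ffun_axis:
  assumes b: "\<And>j. j \<in> {1..h} \<Longrightarrow> b j > 0" and j0: "j0 \<in> {1..h}" "a j0 \<noteq> r"
    and e1: "e1 > 0" and axis_min: "\<And>u. \<bar>u - r\<bar> < e1 \<Longrightarrow> Ffun h a b (pt3 0 r) \<le> Ffun h a b (pt3 0 u)"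
  shows "local_min_at (Ffun h a b) (pt3 0 r)"
proof -
  obtain g \<delta> where g: "g > 0" and \<delta>: "\<delta> > 0"
    and gain: "\<And>t. \<bar>t - r\<bar> < \<delta> \<Longrightarrow> g * ((b j0)\<^sup>2 + (t - a j0)\<^sup>2)\<^sup>2 \<le> 3 * (t - a j0)\<^sup>2"
    using quadratic_gain_near[OF j0(2)] by blast
  define K where "K = (\<Sum>j\<in>{1..h}. 2 / (b j)^3)"
  have b3: "0 \<le> 2 / (b j)^3" if "j \<in> {1..h}" for j
    using b[OF that] by simp
  then have K_ge: "2 / (b j)^3 \<le> K" if "j \<in> {1..h}" for j
    unfolding K_def using that by (intro member_le_sum) auto
  have K: "0 \<le> K" using b3[OF j0(1)] K_ge[OF j0(1)] by (rule order_trans)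
  obtain \<rho>0 where \<rho>0: "\<rho>0 > 0" and est: "\<And>\<rho>. 0 \<le> \<rho> \<Longrightarrow> \<rho> < \<rho>0 \<Longrightarrow>
      0 \<le> 1 - K*\<rho>^3 \<and> 1 \<le> (1 + g*\<rho>\<^sup>2 - K*\<rho>^3) * (1 - K*\<rho>^3)^(h-1)"
    using small_perturbed_product_ge_one[OF g K] by blast
  show ?thesis
    unfolding local_min_at_def
  proof (intro exI[of _ "min e1 (min \<delta> \<rho>0)"] conjI allI impI)
    show "min e1 (min \<delta> \<rho>0) > 0" using e1 \<delta> \<rho>0 by simp
    fix y assume y: "dist y (pt3 0 r) < min e1 (min \<delta> \<rho>0)"
    define \<rho> where "\<rho> = sqrt ((y$1)\<^sup>2 + (y$2)\<^sup>2)"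
    have "0 \<le> \<rho>" "\<rho> < \<rho>0" and t: "\<bar>y$3 - r\<bar> < e1" "\<bar>y$3 - r\<bar> < \<delta>"
      using y axis_dist_le[of y r] unfolding \<rho>_def by auto
    note est = est[OF this(1,2)]
    have "Ffun h a b (pt3 0 (y$3)) * ((1 + g*\<rho>\<^sup>2 - K*\<rho>^3) * (1 - K*\<rho>^3)^(h-1)) \<le> Ffun h a b y"
      unfolding \<rho>_def
      by (rule Ffun_ge_scaled_axis_value[where h=h and a=a and b=b and K=K and y=y,
          OF b j0(1) K_ge less_imp_le[OF g] gain[OF t(2)]])
        (use est in \<open>simp_all add: \<rho>_def\<close>)
    moreover have "Ffun h a b (pt3 0 (y$3)) \<le> Ffun h a b (pt3 0 (y$3)) * ((1 + g*\<rho>\<^sup>2 - K*\<rho>^3) * (1 - K*\<rho>^3)^(h-1))"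
      using mult_left_mono[OF conjunct2[OF est] Ffun_nonneg] by simp
    ultimately show "Ffun h a b (pt3 0 r) \<le> Ffun h a b y"
      using axis_min[OF t(1)] by linarith
  qed
qed

section \<open>Polynomials with interlaced roots\<close>

lemma poly_pderiv_linear_mult_root: "poly (pderiv ([:-z, 1:] * p)) (z::real) = poly p z"
proof -
  have "poly (pderiv ([:-z, 1:] * p)) z = poly [:-z, 1:] z * poly (pderiv p) z + poly (pderiv [:-z, 1:]) z * poly p z"
    by (simp only: pderiv_mult poly_add poly_mult ac_simps)
  then show ?thesis by (simp add: pderiv_pCons)
qed

lemma poly_pair_prod_pos:
  assumes "\<forall>l\<in>S. (x < r l \<and> x < s l) \<or> (r l < x \<and> s l < x)"
  shows "poly (\<Prod>l\<in>S. [:- r l, 1:] * [:- s l, 1:]) (x::real) > 0"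
  unfolding poly_prod
proof (rule prod_pos)
  fix l assume "l \<in> S"
  then have "0 < (x - r l) * (x - s l)"
    using assms by (auto simp: zero_less_mult_iff)
  then show "0 < poly ([:- r l, 1:] * [:- s l, 1:]) x" by (simp add: algebra_simps)
qed

definition interlaced_poly :: "nat \<Rightarrow> (nat \<Rightarrow> real) \<Rightarrow> (nat \<Rightarrow> real) \<Rightarrow> real poly" where
  "interlaced_poly h r s = [:- r h, 1:] * (\<Prod>j\<in>{1..h-1}. [:- r j, 1:] * [:- s j, 1:])"

locale interlacing =
  fixes h :: nat and r s :: "nat \<Rightarrow> real"
  assumes interlace: "\<forall>j\<in>{1..h-1}. r j < s j \<and> s j < r (j + 1)"
begin

lemma r_less: "1 \<le> i \<Longrightarrow> i < j \<Longrightarrow> j \<le> h \<Longrightarrow> r i < r j"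
proof (induction j)
  case (Suc j)
  have "j \<in> {1..h-1}" using Suc.prems by auto
  then have "r j < r (Suc j)" using interlace by fastforce
  then show ?case using Suc by (cases "i = j") auto
qed simp

lemma r_less_s: assumes "1 \<le> i" "i \<le> j" "j \<le> h - 1" shows "r i < s j"
proof -
  have "r j < s j" using interlace assms by auto
  moreover have "r i \<le> r j" using r_less[of i j] assms by (cases "i = j") (auto, arith)
  ultimately show ?thesis by simp
qed

lemma s_less_r: assumes "1 \<le> i" "i < j" "j \<le> h" shows "s i < r j"
proof -
  have "s i < r (i + 1)" using interlace assms by auto
  moreover have "r (i + 1) \<le> r j" using r_less[of "i + 1" j] assms by (cases "i + 1 = j") auto
  ultimately show ?thesis by simp
qed

lemma s_less_s: "1 \<le> i \<Longrightarrow> i < j \<Longrightarrow> j \<le> h - 1 \<Longrightarrow> s i < s j"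
  using s_less_r[of i j] r_less_s[of j j] by force

lemma interlaced_poly_split:
  assumes "j \<in> {1..h-1}"
  shows "interlaced_poly h r s =
    [:- r j, 1:] * [:- s j, 1:] * ([:- r h, 1:] * (\<Prod>l\<in>{1..h-1}-{j}. [:- r l, 1:] * [:- s l, 1:]))"
  unfolding interlaced_poly_def prod.remove[OF finite_atLeastAtMost assms] by (simp only: ac_simps)

lemma other_pairs_prod_pos:
  assumes "j \<in> {1..h-1}" "x = r j \<or> x = s j"
  shows "poly (\<Prod>l\<in>{1..h-1}-{j}. [:- r l, 1:] * [:- s l, 1:]) x > 0"
proof (rule poly_pair_prod_pos, intro ballI)
  fix l assume l: "l \<in> {1..h-1}-{j}"
  have "j \<le> h" "l \<le> h" using assms l by auto
  show "(x < r l \<and> x < s l) \<or> (r l < x \<and> s l < x)"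
  proof (cases "l < j")
    case True
    then show ?thesis
      using assms l \<open>j \<le> h\<close> r_less[of l j] s_less_r[of l j] r_less_s[of l j] s_less_s[of l j] by auto
  next
    case False
    then have "j < l" using l by auto
    then show ?thesis
      using assms l \<open>l \<le> h\<close> r_less[of j l] s_less_r[of j l] r_less_s[of j l] s_less_s[of j l] by auto
  qed
qed

lemma interlaced_poly_at_r:
  assumes j: "j \<in> {1..h}"
  shows "poly (interlaced_poly h r s) (r j) = 0" and "poly (pderiv (interlaced_poly h r s)) (r j) > 0"
proof -
  obtain M where M: "interlaced_poly h r s = [:- r j, 1:] * M" "poly M (r j) > 0"
  proof (cases "j = h")
    case True
    have "poly (\<Prod>l\<in>{1..h-1}. [:- r l, 1:] * [:- s l, 1:]) (r h) > 0"
      using r_less s_less_r by (intro poly_pair_prod_pos) auto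
    then show ?thesis using that True by (simp add: interlaced_poly_def)
  next
    case False
    then have j': "j \<in> {1..h-1}" using j by auto
    have "r j < r h" "r j < s j" using False j r_less_s[of j j] r_less[of j h] by auto
    then have "poly ([:- s j, 1:] * [:- r h, 1:]) (r j) > 0"
      unfolding poly_mult by (simp add: zero_less_mult_iff)
    moreover have "poly (\<Prod>l\<in>{1..h-1}-{j}. [:- r l, 1:] * [:- s l, 1:]) (r j) > 0"
      using other_pairs_prod_pos[OF j'] by simp
    ultimately
    have "poly ([:- s j, 1:] * [:- r h, 1:] * (\<Prod>l\<in>{1..h-1}-{j}. [:- r l, 1:] * [:- s l, 1:])) (r j) > 0"
      unfolding poly_mult[of "[:- s j, 1:] * [:- r h, 1:]"] by (rule mult_pos_pos)
    moreover have "interlaced_poly h r s =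
        [:- r j, 1:] * ([:- s j, 1:] * [:- r h, 1:] * (\<Prod>l\<in>{1..h-1}-{j}. [:- r l, 1:] * [:- s l, 1:]))"
      using interlaced_poly_split[OF j'] by (simp only: ac_simps)
    ultimately show ?thesis using that by blast
  qed
  show "poly (interlaced_poly h r s) (r j) = 0"
    unfolding M(1) poly_mult by simp
  show "poly (pderiv (interlaced_poly h r s)) (r j) > 0"
    unfolding M(1) poly_pderiv_linear_mult_root by (rule M(2))
qed

lemma interlaced_poly_at_s:
  assumes j: "j \<in> {1..h-1}"
  shows "poly (interlaced_poly h r s) (s j) = 0" and "poly (pderiv (interlaced_poly h r s)) (s j) < 0"
proof -
  let ?M = "[:- r j, 1:] * [:- r h, 1:] * (\<Prod>l\<in>{1..h-1}-{j}. [:- r l, 1:] * [:- s l, 1:])"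
  have split: "interlaced_poly h r s = [:- s j, 1:] * ?M"
    using interlaced_poly_split[OF j] by (simp only: ac_simps)
  have "r j < s j" "s j < r h" using j interlace s_less_r[of j h] by auto
  then have "poly ([:- r j, 1:] * [:- r h, 1:]) (s j) < 0" unfolding poly_mult by (simp add: mult_less_0_iff)
  moreover have "poly (\<Prod>l\<in>{1..h-1}-{j}. [:- r l, 1:] * [:- s l, 1:]) (s j) > 0"
    using other_pairs_prod_pos[OF j] by simp
  ultimately have "poly ?M (s j) < 0"
    unfolding poly_mult[of "[:- r j, 1:] * [:- r h, 1:]"] by (rule mult_neg_pos)
  then show "poly (interlaced_poly h r s) (s j) = 0" and "poly (pderiv (interlaced_poly h r s)) (s j) < 0"
    unfolding split poly_pderiv_linear_mult_root by (simp_all only: poly_mult) simp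
qed

end

lemma map_poly_of_real_mult:
  "map_poly of_real (p * q) = map_poly of_real p * (map_poly of_real q :: 'a::{real_algebra_1,comm_ring_1} poly)"
  by (simp add: poly_eq_iff coeff_map_poly coeff_mult)

lemma map_poly_of_real_add:
  "map_poly of_real (p + q) = map_poly of_real p + (map_poly of_real q :: 'a::real_algebra_1 poly)"
  by (simp add: poly_eq_iff coeff_map_poly)

lemma map_poly_of_real_prod:
  "map_poly of_real (\<Prod>i\<in>S. f i) = (\<Prod>i\<in>S. map_poly of_real (f i) :: 'a::{real_algebra_1,comm_ring_1} poly)"
  by (induction S rule: infinite_finite_induct) (auto simp: map_poly_of_real_mult)

lemma map_poly_of_real_pCons: "map_poly of_real (pCons c p) = pCons (of_real c) (map_poly of_real p)"
  by (rule map_poly_pCons) simp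

lemma map_poly_of_real_smult:
  "map_poly of_real (smult c p) = smult (of_real c) (map_poly of_real p :: 'a::{real_algebra_1,comm_ring_1} poly)"
  by (rule map_poly_smult) auto

lemma poly_map_poly_of_real_linear: "poly (map_poly of_real [:-x, 1:]) z = z - of_real x"
  by (simp add: map_poly_of_real_pCons)

locale interlaced_factorization = interlacing +
  fixes a b :: "nat \<Rightarrow> real" and P :: "real poly" and c \<kappa> :: real
  assumes h2: "h \<ge> 2"
    and c_pos: "c > 0"
    and pderiv_P: "pderiv P = smult c (interlaced_poly h r s)"
    and \<kappa>_pos: "\<kappa> > 0"
    and b_pos: "\<And>j. j \<in> {1..h} \<Longrightarrow> b j > 0"
    and P_eq: "P = smult \<kappa> (axis_poly h a b)"
begin

lemma poly_axis_poly_pos: "poly (axis_poly h a b) x > 0"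
  unfolding poly_axis_poly by (intro prod_pos add_pos_nonneg zero_less_power b_pos) auto

lemma pderiv_axis_poly: "pderiv (axis_poly h a b) = smult (c / \<kappa>) (interlaced_poly h r s)"
proof -
  have "pderiv (axis_poly h a b) = smult (1 / \<kappa>) (pderiv P)"
    using \<kappa>_pos unfolding P_eq pderiv_smult by simp
  then show ?thesis unfolding pderiv_P by simp
qed

lemma exists_a_ne: "\<exists>j\<in>{1..h}. a j \<noteq> t"
proof (rule ccontr)
  assume "\<not> ?thesis"
  then have p: "axis_poly h a b = (\<Prod>j\<in>{1..h}. [:-t, 1:]^2 + [:(b j)^2:])"
    unfolding axis_poly_def by (intro prod.cong) auto
  define S where "S x = (\<Sum>j\<in>{1..h}. \<Prod>l\<in>{1..h}-{j}. (b l)\<^sup>2 + (x - t)\<^sup>2)" for x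
  have "S x > 0" for x
    unfolding S_def using h2 by (intro sum_pos prod_pos add_pos_nonneg zero_less_power b_pos) auto
  moreover have "poly (pderiv (axis_poly h a b)) x = 2 * (x - t) * S x" for x
    unfolding p S_def
    by (simp add: pderiv_prod poly_sum poly_prod pderiv_add pderiv_power_Suc pderiv_pCons
        power2_eq_square sum_distrib_left algebra_simps)
  ultimately have roots: "x = t" if "poly (pderiv (axis_poly h a b)) x = 0" for x
    using that by (metis less_irrefl mult_eq_0_iff right_minus_eq zero_neq_numeral)
  have "poly (pderiv (axis_poly h a b)) (r 1) = 0" "poly (pderiv (axis_poly h a b)) (s 1) = 0"
    using h2 interlaced_poly_at_r(1)[of 1] interlaced_poly_at_s(1)[of 1] by (simp_all add: pderiv_axis_poly)
  then have "r 1 = s 1" using roots[of "r 1"] roots[of "s 1"] by simp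
  moreover have "r 1 < s 1" using h2 r_less_s[of 1 1] by simp
  ultimately show False by simp
qed

lemma horizontal_hessian_pos: "horizontal_hessian h a b t > 0"
proof -
  obtain j0 where j0: "j0 \<in> {1..h}" "a j0 \<noteq> t" using exists_a_ne by blast
  show ?thesis
    unfolding horizontal_hessian_def
  proof (rule sum_pos2[OF finite_atLeastAtMost j0(1)])
    have "0 < (b j0)\<^sup>2 + (t - a j0)\<^sup>2"
      using b_pos[OF j0(1)] by (intro add_pos_nonneg) auto
    moreover have "0 < (t - a j0)\<^sup>2" using j0(2) by simp
    moreover have "0 < (\<Prod>l\<in>{1..h}-{j0}. ((b l)\<^sup>2 + (t - a l)\<^sup>2)^3)"
      by (intro prod_pos zero_less_power add_pos_nonneg b_pos) auto
    ultimately show "0 < 6*((b j0)\<^sup>2 + (t - a j0)\<^sup>2)*(t - a j0)\<^sup>2 *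
        (\<Prod>l\<in>{1..h}-{j0}. ((b l)\<^sup>2 + (t - a l)\<^sup>2)^3)"
      by simp
  qed (intro mult_nonneg_nonneg prod_nonneg; simp)
qed

lemma hessian_at_axis_root:
  assumes t: "poly (interlaced_poly h r s) t = 0"
  shows "critical_point (Ffun h a b) (pt3 0 t)"
    and "\<And>i k. i \<noteq> k \<Longrightarrow> hessian (Ffun h a b) (pt3 0 t) $ i $ k = 0"
    and "hessian (Ffun h a b) (pt3 0 t) $ 1 $ 1 > 0" "hessian (Ffun h a b) (pt3 0 t) $ 2 $ 2 > 0"
    and "hessian (Ffun h a b) (pt3 0 t) $ 3 $ 3 =
      3 * (poly (axis_poly h a b) t)\<^sup>2 * (c / \<kappa>) * poly (pderiv (interlaced_poly h r s)) t"
proof -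
  have "poly (pderiv (axis_poly h a b)) t = 0"
    using t by (simp add: pderiv_axis_poly)
  then show "critical_point (Ffun h a b) (pt3 0 t)"
    by (rule critical_point_Ffun_axis)
  show "hessian (Ffun h a b) (pt3 0 t) $ i $ k = 0" if "i \<noteq> k" for i k
    using hessian_Ffun_axis[of i k] that by auto
  show "hessian (Ffun h a b) (pt3 0 t) $ 1 $ 1 > 0" "hessian (Ffun h a b) (pt3 0 t) $ 2 $ 2 > 0"
    using hessian_Ffun_axis horizontal_hessian_pos by simp_all
  show "hessian (Ffun h a b) (pt3 0 t) $ 3 $ 3 =
      3 * (poly (axis_poly h a b) t)\<^sup>2 * (c / \<kappa>) * poly (pderiv (interlaced_poly h r s)) t"
    using t by (simp add: hessian_Ffun_axis_33 pderiv_axis_poly pderiv_smult)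
qed

lemma nondegenerate_at_axis_root:
  assumes "poly (interlaced_poly h r s) t = 0" "poly (pderiv (interlaced_poly h r s)) t \<noteq> 0"
  shows "nondegenerate_critical_point (Ffun h a b) (pt3 0 t)"
proof -
  note H = hessian_at_axis_root[OF assms(1)]
  have "hessian (Ffun h a b) (pt3 0 t) $ 3 $ 3 \<noteq> 0"
    using assms(2) poly_axis_poly_pos[of t] c_pos \<kappa>_pos unfolding H(5) by simp
  then show ?thesis
    unfolding nondegenerate_critical_point_def using det_diagonal3[OF H(2)] H(1,3,4) by simp
qed

lemma axis_r_local_min:
  assumes j: "j \<in> {1..h}"
  shows "local_min_at (Ffun h a b) (pt3 0 (r j))"
proof -
  let ?p = "axis_poly h a b"
  have "poly (pderiv ?p) (r j) = 0" "poly (pderiv (pderiv ?p)) (r j) > 0"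
    using interlaced_poly_at_r[OF j] c_pos \<kappa>_pos by (simp_all add: pderiv_axis_poly pderiv_smult)
  then obtain e1 where e1: "e1 > 0" "\<forall>u. \<bar>u - r j\<bar> < e1 \<longrightarrow> poly ?p (r j) \<le> poly ?p u"
    using local_min_of_second_derivative[OF poly_DERIV poly_DERIV] by blast
  have axis_min: "Ffun h a b (pt3 0 (r j)) \<le> Ffun h a b (pt3 0 u)" if "\<bar>u - r j\<bar> < e1" for u
    using e1(2) that poly_axis_poly_pos[of "r j"] unfolding Ffun_axis by (auto intro: power_mono)
  obtain j0 where "j0 \<in> {1..h}" "a j0 \<noteq> r j" using exists_a_ne by blast
  from b_pos this e1(1) axis_min show ?thesis
    by (rule local_min_Ffun_axis[where h=h and b=b and a=a and r="r j"])
qed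

lemma axis_not_global_min: "\<not> global_min_at (Ffun h a b) (pt3 0 u)"
proof -
  have "Ffun h a b (pt3 0 u) \<noteq> 0"
    unfolding Ffun_axis using poly_axis_poly_pos[of u] by simp
  then show ?thesis
    using global_min_Ffun_iff[of h a b] Ffun_eq_0_iff[of h a b] h2 by simp
qed

lemma axis_s_negativity_index:
  assumes j: "j \<in> {1..h-1}"
  shows "negativity_index (Ffun h a b) (pt3 0 (s j)) = 1"
proof -
  note H = hessian_at_axis_root[OF interlaced_poly_at_s(1)[OF j]]
  have "hessian (Ffun h a b) (pt3 0 (s j)) $ 3 $ 3 < 0"
    unfolding H(5) using interlaced_poly_at_s(2)[OF j] poly_axis_poly_pos[of "s j"] c_pos \<kappa>_pos
    by (intro mult_pos_neg) simp_all
  then show ?thesis using negativity_index_diagonal3 H(2-4) by blast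
qed

lemma factors_distinct:
  assumes jk: "j \<in> {1..h}" "k \<in> {1..h}" "j \<noteq> k" and eq: "a j = a k" "b j = b k"
  shows False
proof -
  define f where "f i = [:- a i, 1:]^2 + [:(b i)^2:]" for i
  define W where "W = (\<Prod>i\<in>{1..h}-{j}-{k}. f i)"
  define z where "z = Complex (a j) (b j)"
  have "axis_poly h a b = f j * (\<Prod>i\<in>{1..h}-{j}. f i)"
    unfolding axis_poly_def f_def[symmetric] using jk by (simp add: prod.remove)
  also have "(\<Prod>i\<in>{1..h}-{j}. f i) = f k * W"
    unfolding W_def using jk by (simp add: prod.remove)
  also have "f k = f j"
    unfolding f_def using eq by simp
  finally have "pderiv (axis_poly h a b) = f j * (pderiv (f j * W) + pderiv (f j) * W)"
    by (simp add: pderiv_mult algebra_simps)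
  moreover have "poly (map_poly complex_of_real (f j)) z = 0"
    unfolding f_def z_def
    by (simp add: map_poly_of_real_add map_poly_of_real_mult map_poly_of_real_pCons power2_eq_square complex_eq_iff)
  ultimately have "poly (map_poly complex_of_real (pderiv (axis_poly h a b))) z = 0"
    by (simp add: map_poly_of_real_mult)
  moreover have "poly (map_poly complex_of_real (pderiv (axis_poly h a b))) z =
      complex_of_real (c / \<kappa>) * ((z - of_real (r h)) * (\<Prod>l\<in>{1..h-1}. (z - of_real (r l)) * (z - of_real (s l))))"
    unfolding pderiv_axis_poly interlaced_poly_def
    by (simp only: map_poly_of_real_smult map_poly_of_real_mult map_poly_of_real_prod
        poly_smult poly_mult poly_prod poly_map_poly_of_real_linear)
  moreover have "z - complex_of_real x \<noteq> 0" for x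
    using b_pos[OF jk(1)] by (simp add: z_def complex_eq_iff)
  ultimately show False using c_pos \<kappa>_pos by (simp add: prod_zero_iff)
qed

lemma inj_on_wpt: "inj_on (\<lambda>(j, i). wpt a b j i) ({1..h} \<times> {1..3})"
proof (rule inj_onI, clarify)
  fix j i j' i'
  assume j: "j \<in> {1..h}" "i \<in> {1..3::nat}" "j' \<in> {1..h}" "i' \<in> {1..3::nat}"
    and eq: "wpt a b j i = wpt a b j' i'"
  then have z: "xi ^ i * complex_of_real (b j) = xi ^ i' * complex_of_real (b j')" and a: "a j = a j'"
    unfolding wpt_def pt3_def by (auto simp: vec_eq_iff forall_3 vector_3 complex_eq_iff)
  have "b j = norm (xi ^ i * complex_of_real (b j))" "b j' = norm (xi ^ i' * complex_of_real (b j'))"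
    using b_pos[OF j(1)] b_pos[OF j(3)] by (simp_all add: norm_mult norm_power norm_xi)
  then have b: "b j = b j'" using z by simp
  then have "xi ^ i = xi ^ i'" using z b_pos[OF j(1)] by simp
  moreover have "xi ^ 1 \<noteq> xi ^ 2" "xi ^ 1 \<noteq> xi ^ 3" "xi ^ 2 \<noteq> xi ^ 3"
    unfolding xi_squared xi_cubed by (simp_all add: xi_eq complex_eq_iff)
  ultimately have "i = i'" using j(2,4) by (auto simp: atLeastAtMost_iff le_Suc_eq numeral_3_eq_3)
  moreover have "j = j'" using factors_distinct[OF j(1,3) _ a b] by blast
  ultimately show "j = j' \<and> i = i'" by simp
qed

end

theorem proposition8p1:
  fixes h :: nat and r s a b :: "nat \<Rightarrow> real" and P :: "real poly" and c \<kappa> :: real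
  assumes h2: "h \<ge> 2"
    and interlace: "\<forall>j\<in>{1..h-1}. r j < s j \<and> s j < r (j + 1)"
    and degP: "degree P = 2 * h"
    and lcP: "lead_coeff P > 0"
    and Ppos: "\<forall>x. poly P x > 0"
    and cpos: "c > 0"
    and derivP: "pderiv P = smult c ([:- r h, 1:] * (\<Prod>j\<in>{1..h-1}. [:- r j, 1:] * [:- s j, 1:]))"
    and kpos: "\<kappa> > 0"
    and bpos: "\<forall>j\<in>{1..h}. b j > 0"
    and factP: "P = smult \<kappa> (\<Prod>j\<in>{1..h}. [:- a j, 1:]^2 + [:(b j)^2:])"
  shows "inj_on (\<lambda>(j, i). wpt a b j i) ({1..h} \<times> {1..3})
    \<and> (\<forall>j\<in>{1..h}. local_min_at (Ffun h a b) (pt3 0 (r j))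
          \<and> nondegenerate_critical_point (Ffun h a b) (pt3 0 (r j))
          \<and> \<not> global_min_at (Ffun h a b) (pt3 0 (r j)))
    \<and> (\<forall>j\<in>{1..h-1}. nondegenerate_critical_point (Ffun h a b) (pt3 0 (s j))
          \<and> negativity_index (Ffun h a b) (pt3 0 (s j)) = 1)
    \<and> {x. global_min_at (Ffun h a b) x} = (\<lambda>(j, i). wpt a b j i) ` ({1..h} \<times> {1..3})"
proof -
  interpret interlaced_factorization h r s a b P c \<kappa>
    using h2 interlace cpos derivP kpos bpos factP
    by unfold_locales (simp_all add: interlaced_poly_def axis_poly_def)
  have "local_min_at (Ffun h a b) (pt3 0 (r j)) \<and> nondegenerate_critical_point (Ffun h a b) (pt3 0 (r j))
      \<and> \<not> global_min_at (Ffun h a b) (pt3 0 (r j))" if "j \<in> {1..h}" for j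
    using axis_r_local_min[OF that] axis_not_global_min
      nondegenerate_at_axis_root[OF interlaced_poly_at_r(1)[OF that]] interlaced_poly_at_r(2)[OF that]
    by simp
  moreover have "nondegenerate_critical_point (Ffun h a b) (pt3 0 (s j))
      \<and> negativity_index (Ffun h a b) (pt3 0 (s j)) = 1" if "j \<in> {1..h-1}" for j
    using axis_s_negativity_index[OF that]
      nondegenerate_at_axis_root[OF interlaced_poly_at_s(1)[OF that]] interlaced_poly_at_s(2)[OF that]
    by simp
  moreover have "{x. global_min_at (Ffun h a b) x} = (\<lambda>(j, i). wpt a b j i) ` ({1..h} \<times> {1..3})"
    using global_min_Ffun_iff[of h a b] h2 by auto
  ultimately show ?thesis using inj_on_wpt by blast
qed

end
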